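(* Let $\vartheta:=\frac{1}{\sqrt2}\sup_{f\in U_1}A(H(\mathfrak{g}_f))$. Then $\vartheta\ge0.090435$.
   Context: $U_1$ is the set of absolutely continuous $f:[0,1]\to\mathbb{R}$ with $f(0)=0$ and $\int_0^1f'(s)^2ds\le1$. $\mathfrak{g}_f(0):=0$ and $\mathfrak{g}_f(t):=\frac1t\int_0^tf(s)\,ds$ for $0<t\le1$. $H(g):=\operatorname{hull}\{(t,g(t)):0\le t\le1\}\subset\mathbb{R}^2$, and $A$ denotes planar area. (This $\vartheta$ is the constant such that, for a planar random walk with i.i.d. increments of finite second moment, identity covariance and non-zero drift $\mu$, the convex hull $\mathcal G_n$ of its centre-of-mass process $G_n=\frac1n\sum_{i=1}^nS_i$ satisfies $\limsup_n A(\mathcal G_n)/(n^{3/2}\sqrt{\log\log n})=\vartheta\|\mu\|$ a.s.) *)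

theory Defs
  imports "HOL-Analysis.Analysis"
begin

definition abs_continuous_on :: "real \<Rightarrow> real \<Rightarrow> (real \<Rightarrow> real) \<Rightarrow> bool" where
  "abs_continuous_on a b f \<longleftrightarrow>
     (\<forall>\<epsilon>>0. \<exists>\<delta>>0. \<forall>(n::nat) (l::nat \<Rightarrow> real) (r::nat \<Rightarrow> real).
        (\<forall>i<n. a \<le> l i \<and> l i \<le> r i \<and> r i \<le> b) \<and>
        (\<forall>i<n. \<forall>j<n. i \<noteq> j \<longrightarrow> r i \<le> l j \<or> r j \<le> l i) \<and>
        (\<Sum>i<n. r i - l i) < \<delta>
        \<longrightarrow> (\<Sum>i<n. \<bar>f (r i) - f (l i)\<bar>) < \<epsilon>)"

definition U1 :: "(real \<Rightarrow> real) set" where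
  "U1 = {f. abs_continuous_on 0 1 f \<and> f 0 = 0 \<and>
           (\<exists>f'. (AE s in lebesgue. s \<in> {0..1} \<longrightarrow>
                     (f has_real_derivative f' s) (at s within {0..1})) \<and>
                 (\<lambda>s. (f' s)\<^sup>2) integrable_on {0..1} \<and>
                 integral {0..1} (\<lambda>s. (f' s)\<^sup>2) \<le> 1)}"

definition gmean :: "(real \<Rightarrow> real) \<Rightarrow> real \<Rightarrow> real" where
  "gmean f t = (if t = 0 then 0 else (1 / t) * integral {0..t} f)"

definition Hull :: "(real \<Rightarrow> real) \<Rightarrow> (real \<times> real) set" where
  "Hull g = convex hull ((\<lambda>t. (t, g t)) ` {0..1})"

definition area :: "(real \<times> real) set \<Rightarrow> real" where
  "area S = measure lebesgue S"

definition theta :: real where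
  "theta = (1 / sqrt 2) * Sup {area (Hull (gmean f)) | f. f \<in> U1}"

end

theory Submission
  imports Defs
begin

(*
  The witness f0(t) = 11/4 t - 231/40 t^2 + 121/40 t^3 has f0(0) = 0 and energy
  \<integral>f0'^2 = 121/125 \<le> 1.  Its running mean g0 is a cubic lying above its chord over [0,1],
  so the hull of the graph of g0 contains the region between chord and graph, of area
  253/1920 > 0.090435 * sqrt 2.

  Because theta is a supremum of reals, this only bounds theta from below once the areas are
  known to be bounded above.  For f \<in> U1 the image f([0,1]) has measure at most
  \<integral>|f'| \<le> \<integral>(1 + f'^2)/2 \<le> 1: on the set where f is differentiable by the area formula,
  and on the exceptional null set because absolutely continuous functions map null sets to
  null sets (Lusin's property (N)).  Hence |f| \<le> 1, so |g_f| \<le> 1 and every hull lies in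
  [0,1] \<times> [-1,1].
*)

section \<open>Absolute continuity\<close>

lemma abs_continuous_onE:
  assumes "abs_continuous_on a b f" "\<epsilon> > 0"
  obtains \<delta> where "\<delta> > 0"
    "\<And>(I :: 'i set) l r. \<lbrakk>finite I; \<And>i. i \<in> I \<Longrightarrow> a \<le> l i \<and> l i \<le> r i \<and> r i \<le> b;
        \<And>i j. \<lbrakk>i \<in> I; j \<in> I; i \<noteq> j\<rbrakk> \<Longrightarrow> r i \<le> l j \<or> r j \<le> l i; (\<Sum>i\<in>I. r i - l i) < \<delta>\<rbrakk>
       \<Longrightarrow> (\<Sum>i\<in>I. \<bar>f (r i) - f (l i)\<bar>) < \<epsilon>"
proof -
  obtain \<delta> where "\<delta> > 0" and \<delta>: "\<forall>(n::nat) l r.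
        (\<forall>i<n. a \<le> l i \<and> l i \<le> r i \<and> r i \<le> b) \<and>
        (\<forall>i<n. \<forall>j<n. i \<noteq> j \<longrightarrow> r i \<le> l j \<or> r j \<le> l i) \<and>
        (\<Sum>i<n. r i - l i) < \<delta> \<longrightarrow> (\<Sum>i<n. \<bar>f (r i) - f (l i)\<bar>) < \<epsilon>"
    using assms unfolding abs_continuous_on_def by blast
  show thesis
  proof (rule that[OF \<open>\<delta> > 0\<close>])
    fix I :: "'i set" and l r
    assume I: "finite I" and lr: "\<And>i. i \<in> I \<Longrightarrow> a \<le> l i \<and> l i \<le> r i \<and> r i \<le> b"
      and disj: "\<And>i j. \<lbrakk>i \<in> I; j \<in> I; i \<noteq> j\<rbrakk> \<Longrightarrow> r i \<le> l j \<or> r j \<le> l i"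
      and small: "(\<Sum>i\<in>I. r i - l i) < \<delta>"
    obtain h where h: "bij_betw h {..<card I} I"
      using ex_bij_betw_nat_finite[OF I] by (auto simp: atLeast0LessThan)
    have hI: "h i \<in> I" if "i < card I" for i
      using h that by (auto simp: bij_betw_def)
    have h_inj: "h i \<noteq> h j" if "i < card I" "j < card I" "i \<noteq> j" for i j
      using h that by (auto simp: bij_betw_def inj_on_def)
    have "\<forall>i<card I. a \<le> (l \<circ> h) i \<and> (l \<circ> h) i \<le> (r \<circ> h) i \<and> (r \<circ> h) i \<le> b"
      using lr hI by simp
    moreover have "\<forall>i<card I. \<forall>j<card I. i \<noteq> j \<longrightarrow> (r \<circ> h) i \<le> (l \<circ> h) j \<or> (r \<circ> h) j \<le> (l \<circ> h) i"
      using disj hI h_inj by simp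
    moreover have "(\<Sum>i<card I. (r \<circ> h) i - (l \<circ> h) i) < \<delta>"
      using small sum.reindex_bij_betw[OF h, of "\<lambda>i. r i - l i"] by simp
    ultimately have "(\<Sum>i<card I. \<bar>f ((r \<circ> h) i) - f ((l \<circ> h) i)\<bar>) < \<epsilon>"
      using \<delta> by blast
    then show "(\<Sum>i\<in>I. \<bar>f (r i) - f (l i)\<bar>) < \<epsilon>"
      using sum.reindex_bij_betw[OF h, of "\<lambda>i. \<bar>f (r i) - f (l i)\<bar>"] by simp
  qed
qed

lemma abs_continuous_on_imp_continuous_on:
  assumes "abs_continuous_on a b f"
  shows "continuous_on {a..b} f"
  unfolding continuous_on_iff
proof (intro ballI allI impI)
  fix x \<epsilon> :: real assume x: "x \<in> {a..b}" and "\<epsilon> > 0"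
  obtain \<delta> where "\<delta> > 0" and \<delta>: "\<And>(I :: unit set) l r. \<lbrakk>finite I;
      \<And>i. i \<in> I \<Longrightarrow> a \<le> l i \<and> l i \<le> r i \<and> r i \<le> b;
      \<And>i j. \<lbrakk>i \<in> I; j \<in> I; i \<noteq> j\<rbrakk> \<Longrightarrow> r i \<le> l j \<or> r j \<le> l i; (\<Sum>i\<in>I. r i - l i) < \<delta>\<rbrakk>
     \<Longrightarrow> (\<Sum>i\<in>I. \<bar>f (r i) - f (l i)\<bar>) < \<epsilon>"
    by (rule abs_continuous_onE[OF assms \<open>\<epsilon> > 0\<close>]) (rule that; blast)
  have close: "\<bar>f v - f u\<bar> < \<epsilon>" if "a \<le> u" "u \<le> v" "v \<le> b" "v - u < \<delta>" for u v
    using \<delta>[of "{()}" "\<lambda>_. u" "\<lambda>_. v"] that by simp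
  have "dist (f y) (f x) < \<epsilon>" if "y \<in> {a..b}" "dist y x < \<delta>" for y
    using close[of x y] close[of y x] x that
    by (cases "x \<le> y") (auto simp: dist_real_def abs_minus_commute)
  with \<open>\<delta> > 0\<close> show "\<exists>\<delta>>0. \<forall>y\<in>{a..b}. dist y x < \<delta> \<longrightarrow> dist (f y) (f x) < \<epsilon>"
    by blast
qed

lemma lipschitz_on_imp_abs_continuous_on:
  assumes "C-lipschitz_on {a..b} f"
  shows "abs_continuous_on a b f"
  unfolding abs_continuous_on_def
proof (intro allI impI)
  fix \<epsilon> :: real assume "\<epsilon> > 0"
  have C: "C \<ge> 0"
    using assms by (rule lipschitz_on_nonneg)
  show "\<exists>\<delta>>0. \<forall>(n::nat) l r. (\<forall>i<n. a \<le> l i \<and> l i \<le> r i \<and> r i \<le> b) \<and>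
      (\<forall>i<n. \<forall>j<n. i \<noteq> j \<longrightarrow> r i \<le> l j \<or> r j \<le> l i) \<and> (\<Sum>i<n. r i - l i) < \<delta> \<longrightarrow>
      (\<Sum>i<n. \<bar>f (r i) - f (l i)\<bar>) < \<epsilon>"
  proof (intro exI[of _ "\<epsilon> / (C + 1)"] conjI allI impI)
    show "\<epsilon> / (C + 1) > 0"
      using \<open>\<epsilon> > 0\<close> C by simp
    fix n :: nat and l r
    assume "(\<forall>i<n. a \<le> l i \<and> l i \<le> r i \<and> r i \<le> b) \<and>
      (\<forall>i<n. \<forall>j<n. i \<noteq> j \<longrightarrow> r i \<le> l j \<or> r j \<le> l i) \<and> (\<Sum>i<n. r i - l i) < \<epsilon> / (C + 1)"
    then have lr: "\<forall>i<n. a \<le> l i \<and> l i \<le> r i \<and> r i \<le> b"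
      and small: "(\<Sum>i<n. r i - l i) < \<epsilon> / (C + 1)"
      by simp_all
    have "(\<Sum>i<n. \<bar>f (r i) - f (l i)\<bar>) \<le> (\<Sum>i<n. C * (r i - l i))"
    proof (rule sum_mono)
      fix i assume "i \<in> {..<n}"
      then have "a \<le> l i" "l i \<le> r i" "r i \<le> b"
        using lr by auto
      then show "\<bar>f (r i) - f (l i)\<bar> \<le> C * (r i - l i)"
        using lipschitz_onD[OF assms, of "r i" "l i"] by (simp add: dist_real_def)
    qed
    also have "\<dots> = C * (\<Sum>i<n. r i - l i)"
      by (simp add: sum_distrib_left)
    also have "\<dots> \<le> C * (\<epsilon> / (C + 1))"
      using small C by (intro mult_left_mono) auto
    also have "\<dots> < \<epsilon>"
      using \<open>\<epsilon> > 0\<close> C by (simp add: field_simps)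
    finally show "(\<Sum>i<n. \<bar>f (r i) - f (l i)\<bar>) < \<epsilon>" .
  qed
qed

lemma measure_continuous_image_Icc:
  fixes f :: "real \<Rightarrow> real"
  assumes "continuous_on {a..b} f" "a \<le> b"
  obtains x y where "a \<le> x" "x \<le> y" "y \<le> b" "measure lebesgue (f ` {a..b}) = \<bar>f y - f x\<bar>"
proof -
  obtain u v where uv: "f ` {a..b} = {u..v}" "u \<le> v"
    using continuous_image_closed_interval[OF assms(2,1)] by blast
  then obtain p q where p: "p \<in> {a..b}" "f p = u" and q: "q \<in> {a..b}" "f q = v"
    by (metis atLeastAtMost_iff imageE order_refl)
  have m: "measure lebesgue (f ` {a..b}) = v - u"
    using uv by simp
  show thesis
  proof (cases "p \<le> q")
    case True
    with p q m uv(2) show thesis by (intro that[of p q]) auto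
  next
    case False
    with p q m uv(2) show thesis by (intro that[of q p]) auto
  qed
qed

lemma abs_continuous_on_sum_measure_image_le:
  fixes f :: "real \<Rightarrow> real"
  assumes ac: "abs_continuous_on a b f" and "\<epsilon> > 0"
  obtains \<delta> where "\<delta> > 0"
    "\<And>(I :: 'i set) c d. \<lbrakk>finite I; \<And>i. i \<in> I \<Longrightarrow> a \<le> c i \<and> c i \<le> d i \<and> d i \<le> b;
        \<And>i j. \<lbrakk>i \<in> I; j \<in> I; i \<noteq> j\<rbrakk> \<Longrightarrow> d i \<le> c j \<or> d j \<le> c i; (\<Sum>i\<in>I. d i - c i) < \<delta>\<rbrakk>
       \<Longrightarrow> (\<Sum>i\<in>I. measure lebesgue (f ` {c i..d i})) \<le> \<epsilon>"
proof -
  obtain \<delta> where "\<delta> > 0" and \<delta>: "\<And>(I :: 'i set) l r. \<lbrakk>finite I;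
      \<And>i. i \<in> I \<Longrightarrow> a \<le> l i \<and> l i \<le> r i \<and> r i \<le> b;
      \<And>i j. \<lbrakk>i \<in> I; j \<in> I; i \<noteq> j\<rbrakk> \<Longrightarrow> r i \<le> l j \<or> r j \<le> l i; (\<Sum>i\<in>I. r i - l i) < \<delta>\<rbrakk>
     \<Longrightarrow> (\<Sum>i\<in>I. \<bar>f (r i) - f (l i)\<bar>) < \<epsilon>"
    by (rule abs_continuous_onE[OF assms]) (rule that; blast)
  show thesis
  proof (rule that[OF \<open>\<delta> > 0\<close>])
    fix I :: "'i set" and c d
    assume I: "finite I" and cd: "\<And>i. i \<in> I \<Longrightarrow> a \<le> c i \<and> c i \<le> d i \<and> d i \<le> b"
      and disj: "\<And>i j. \<lbrakk>i \<in> I; j \<in> I; i \<noteq> j\<rbrakk> \<Longrightarrow> d i \<le> c j \<or> d j \<le> c i"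
      and small: "(\<Sum>i\<in>I. d i - c i) < \<delta>"
    have "\<exists>x y. c i \<le> x \<and> x \<le> y \<and> y \<le> d i \<and> measure lebesgue (f ` {c i..d i}) = \<bar>f y - f x\<bar>"
      if i: "i \<in> I" for i
    proof -
      have "{c i..d i} \<subseteq> {a..b}"
        using cd[OF i] by auto
      then have "continuous_on {c i..d i} f"
        using abs_continuous_on_imp_continuous_on[OF ac] continuous_on_subset by blast
      then obtain x y where "c i \<le> x" "x \<le> y" "y \<le> d i" "measure lebesgue (f ` {c i..d i}) = \<bar>f y - f x\<bar>"
        using cd[OF i] by (elim measure_continuous_image_Icc) simp
      then show ?thesis
        by blast
    qed
    then obtain x y where xy: "\<And>i. i \<in> I \<Longrightarrow> c i \<le> x i \<and> x i \<le> y i \<and> y i \<le> d i \<and>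
        measure lebesgue (f ` {c i..d i}) = \<bar>f (y i) - f (x i)\<bar>"
      by metis
    have "(\<Sum>i\<in>I. \<bar>f (y i) - f (x i)\<bar>) < \<epsilon>"
    proof (rule \<delta>[OF I])
      show "a \<le> x i \<and> x i \<le> y i \<and> y i \<le> b" if "i \<in> I" for i
        using xy[OF that] cd[OF that] by auto
      show "y i \<le> x j \<or> y j \<le> x i" if "i \<in> I" "j \<in> I" "i \<noteq> j" for i j
        using disj[OF that] xy[OF that(1)] xy[OF that(2)] by auto
      have "(\<Sum>i\<in>I. y i - x i) \<le> (\<Sum>i\<in>I. d i - c i)"
        using xy by (intro sum_mono) fastforce
      then show "(\<Sum>i\<in>I. y i - x i) < \<delta>"
        using small by linarith
    qed
    then show "(\<Sum>i\<in>I. measure lebesgue (f ` {c i..d i})) \<le> \<epsilon>"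
      using xy by simp
  qed
qed

section \<open>Measure of images of real functions\<close>

lemma measure_vec1_image:
  fixes A :: "real set"
  assumes "(vec ` A :: (real^1) set) \<in> lmeasurable"
  shows "A \<in> lmeasurable" "measure lebesgue A = measure lebesgue (vec ` A :: (real^1) set)"
proof -
  obtain m where m: "((\<lambda>x. 1::real) has_integral m) (vec ` A :: (real^1) set)"
    using assms unfolding lmeasurable_iff_integrable_on integrable_on_def by blast
  then have "(((\<lambda>x::real^1. 1::real) \<circ> vec) has_integral m) ((\<lambda>x::real^1. x $ 1) ` vec ` A)"
    by (rule has_integral_vec1_I)
  then have mA: "((\<lambda>x. 1::real) has_integral m) A"
    by (simp add: image_image o_def)
  then show A: "A \<in> lmeasurable"
    unfolding lmeasurable_iff_integrable_on by blast
  show "measure lebesgue A = measure lebesgue (vec ` A :: (real^1) set)"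
    using lmeasure_integral[OF A] lmeasure_integral[OF assms] mA m by (simp add: integral_unique)
qed

lemma measure_differentiable_image_real_le:
  fixes f f' g :: "real \<Rightarrow> real"
  assumes S: "S \<in> sets lebesgue"
    and f': "\<And>x. x \<in> S \<Longrightarrow> (f has_real_derivative f' x) (at x within S)"
    and g: "g integrable_on S" and f'_le: "\<And>x. x \<in> S \<Longrightarrow> \<bar>f' x\<bar> \<le> g x"
  shows "f ` S \<in> lmeasurable" "measure lebesgue (f ` S) \<le> integral S g"
proof -
  \<comment> \<open>The library's area formula is stated for maps on \<open>real^'n\<close>; transport \<open>f\<close> along \<open>vec\<close>.\<close>
  let ?S = "vec ` S :: (real^1) set"
  define F where "F x = (vec (f (x $ 1)) :: real^1)" for x :: "real^1"
  define F' where "F' x = (\<lambda>h::real^1. f' (x $ 1) *\<^sub>R h)" for x :: "real^1"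
  have S1: "?S \<in> sets lebesgue"
    by (auto intro: differentiable_image_in_sets_lebesgue [OF S] differentiable_vec)
  have F': "(F has_derivative F' x) (at x within ?S)" if "x \<in> ?S" for x
  proof -
    obtain z where z: "z \<in> S" "x = vec z" using \<open>x \<in> ?S\<close> by blast
    have "(f has_derivative (\<lambda>h. h * f' z)) (at z within S)"
      using f'[OF z(1)] by (simp add: has_field_derivative_def mult.commute[of _ "f' z"])
    then have "((\<lambda>x. vec (f (x $ 1))) has_derivative (*\<^sub>R) (f' z)) (at (vec z :: real^1) within ?S)"
      by (rule has_derivative_vector_1)
    then show ?thesis using z by (simp add: F_def[abs_def] F'_def[abs_def])
  qed
  have det_F': "det (matrix (F' x)) = f' (x $ 1)" for x
    by (simp add: F'_def det_1 matrix_def)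
  have g1: "(\<lambda>x::real^1. g (x $ 1)) integrable_on ?S"
  proof -
    obtain m where "(g has_integral m) S" using g by blast
    then have "(((\<lambda>x::real^1. g (x $ 1)) \<circ> vec) has_integral m) ((\<lambda>x::real^1. x $ 1) ` ?S)"
      by (simp add: image_image o_def)
    then show ?thesis unfolding integrable_on_def by (blast dest: has_integral_vec1_D)
  qed
  have "(\<lambda>x. f' (x $ 1)) \<in> borel_measurable (lebesgue_on ?S)"
    using borel_measurable_det_Jacobian[OF S1 F'] by (simp add: det_F')
  then have "(\<lambda>x. \<bar>f' (x $ 1)\<bar>) integrable_on ?S"
    by (intro measurable_bounded_by_integrable_imp_integrable_real[OF _ g1 _ S1])
       (use f'_le in auto)
  then have J: "(\<lambda>x. \<bar>det (matrix (F' x))\<bar>) integrable_on ?S"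
    by (simp add: det_F')
  have FS: "F ` ?S = vec ` (f ` S)"
    by (auto simp: F_def image_image)
  have "measure lebesgue (F ` ?S) \<le> integral ?S (\<lambda>x. \<bar>det (matrix (F' x))\<bar>)"
    by (rule measure_differentiable_image[OF S1 F' J])
  also have "\<dots> \<le> integral ?S (\<lambda>x::real^1. g (x $ 1))"
    by (rule integral_le[OF J g1]) (use f'_le in \<open>auto simp: det_F'\<close>)
  also have "\<dots> = integral S g"
    by (simp add: integral_vec1_eq image_image o_def)
  finally show "f ` S \<in> lmeasurable" "measure lebesgue (f ` S) \<le> integral S g"
    using measure_vec1_image[of "f ` S"] measurable_differentiable_image[OF S1 F' J] FS by auto
qed

lemma disjoint_Ioo_imp_le:
  fixes a b c d :: real
  assumes "{a<..<b} \<inter> {c<..<d} = {}" "a < b" "c < d"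
  shows "b \<le> c \<or> d \<le> a"
proof (rule ccontr)
  assume "\<not> (b \<le> c \<or> d \<le> a)"
  then have "(max a c + min b d) / 2 \<in> {a<..<b} \<inter> {c<..<d}"
    using assms(2,3) by (auto simp: max_def min_def)
  with assms(1) show False by blast
qed

lemma negligible_Icc_cover:
  fixes N :: "real set"
  assumes N: "negligible N" "N \<subseteq> {a..b}" and "a < b" "\<delta> > 0"
  obtains \<D> c d where "countable \<D>" "N \<subseteq> \<Union>\<D>"
    "\<And>K. K \<in> \<D> \<Longrightarrow> K = {c K..d K}" "\<And>K. K \<in> \<D> \<Longrightarrow> a \<le> c K \<and> c K < d K \<and> d K \<le> b"
    "\<And>K L. \<lbrakk>K \<in> \<D>; L \<in> \<D>; K \<noteq> L\<rbrakk> \<Longrightarrow> d K \<le> c L \<or> d L \<le> c K"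
    "\<And>\<F>. \<lbrakk>\<F> \<subseteq> \<D>; finite \<F>\<rbrakk> \<Longrightarrow> (\<Sum>K\<in>\<F>. d K - c K) < \<delta>"
proof -
  obtain \<D> where "countable \<D>"
    and \<D>_cbox: "\<And>K. K \<in> \<D> \<Longrightarrow> K \<subseteq> cbox a b \<and> K \<noteq> {} \<and> (\<exists>c d. K = cbox c d)"
    and \<D>_disj: "pairwise (\<lambda>K L. interior K \<inter> interior L = {}) \<D>"
    and \<D>_interior: "\<And>K. \<lbrakk>K \<in> \<D>; box a b \<noteq> {}\<rbrakk> \<Longrightarrow> interior K \<noteq> {}"
    and "N \<subseteq> \<Union>\<D>" "\<Union>\<D> \<in> lmeasurable"
    and \<D>_small: "measure lebesgue (\<Union>\<D>) \<le> measure lebesgue N + \<delta> / 2"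
    using measurable_outer_intervals_bounded[OF negligible_imp_measurable[OF N(1)] _ half_gt_zero[OF \<open>\<delta> > 0\<close>]]
      N(2) by (metis cbox_interval)
  have Icc: "K = {Inf K..Sup K}" "a \<le> Inf K \<and> Inf K < Sup K \<and> Sup K \<le> b" if K: "K \<in> \<D>" for K
  proof -
    obtain c d where "K = {c..d}" "K \<subseteq> {a..b}"
      using \<D>_cbox[OF K] by auto
    moreover have "interior K \<noteq> {}"
      using \<D>_interior[OF K] \<open>a < b\<close> by simp
    ultimately show "K = {Inf K..Sup K}" "a \<le> Inf K \<and> Inf K < Sup K \<and> Sup K \<le> b"
      by auto
  qed
  have ordered: "Sup K \<le> Inf L \<or> Sup L \<le> Inf K" if KL: "K \<in> \<D>" "L \<in> \<D>" "K \<noteq> L" for K L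
  proof (rule disjoint_Ioo_imp_le)
    have "interior K \<inter> interior L = {}"
      using \<D>_disj KL by (auto simp: pairwise_def)
    then show "{Inf K<..<Sup K} \<inter> {Inf L<..<Sup L} = {}"
      using Icc(1)[OF KL(1)] Icc(1)[OF KL(2)] by (metis interior_atLeastAtMost_real)
  qed (use Icc(2)[OF KL(1)] Icc(2)[OF KL(2)] in auto)
  have small: "(\<Sum>K\<in>\<F>. Sup K - Inf K) < \<delta>" if \<F>: "\<F> \<subseteq> \<D>" "finite \<F>" for \<F>
  proof -
    have div: "\<F> division_of \<Union>\<F>"
    proof (rule division_ofI)
      show "interior K \<inter> interior L = {}" if "K \<in> \<F>" "L \<in> \<F>" "K \<noteq> L" for K L
        using \<D>_disj \<F> that unfolding pairwise_def by blast
    qed (use \<F> \<D>_cbox in auto)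
    have "measure lebesgue K = Sup K - Inf K" if "K \<in> \<D>" for K
      using Icc(2)[OF that] by (subst Icc(1)[OF that]) simp
    then have "(\<Sum>K\<in>\<F>. Sup K - Inf K) = (\<Sum>K\<in>\<F>. measure lebesgue K)"
      using \<F>(1) by (intro sum.cong) auto
    also have "\<dots> = measure lebesgue (\<Union>\<F>)"
      using div by (rule content_division)
    also have "\<dots> \<le> measure lebesgue (\<Union>\<D>)"
      using \<F>(1) \<open>\<Union>\<D> \<in> lmeasurable\<close> lmeasurable_division[OF div]
      by (intro measure_mono_fmeasurable) auto
    also have "\<dots> < \<delta>"
      using \<D>_small N(1) \<open>\<delta> > 0\<close> by (simp add: negligible_imp_measure0)
    finally show ?thesis .
  qed
  show thesis
    using \<open>countable \<D>\<close> \<open>N \<subseteq> \<Union>\<D>\<close> Icc ordered small by (rule that)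
qed

lemma abs_continuous_on_image_Icc_cover:
  fixes f :: "real \<Rightarrow> real"
  assumes ac: "abs_continuous_on a b f" and N: "negligible N" "N \<subseteq> {a..b}" and "a < b" "\<epsilon> > 0"
  obtains \<D> where "countable \<D>" "N \<subseteq> \<Union>\<D>" "\<And>K. K \<in> \<D> \<Longrightarrow> f ` K \<in> lmeasurable"
    "\<And>\<F>. \<lbrakk>\<F> \<subseteq> \<D>; finite \<F>\<rbrakk> \<Longrightarrow> (\<Sum>K\<in>\<F>. measure lebesgue (f ` K)) \<le> \<epsilon>"
proof -
  obtain \<delta> where "\<delta> > 0" and \<delta>: "\<And>(I :: real set set) c d. \<lbrakk>finite I;
      \<And>i. i \<in> I \<Longrightarrow> a \<le> c i \<and> c i \<le> d i \<and> d i \<le> b;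
      \<And>i j. \<lbrakk>i \<in> I; j \<in> I; i \<noteq> j\<rbrakk> \<Longrightarrow> d i \<le> c j \<or> d j \<le> c i; (\<Sum>i\<in>I. d i - c i) < \<delta>\<rbrakk>
     \<Longrightarrow> (\<Sum>i\<in>I. measure lebesgue (f ` {c i..d i})) \<le> \<epsilon>"
    by (rule abs_continuous_on_sum_measure_image_le[OF ac \<open>\<epsilon> > 0\<close>]) (rule that; blast)
  show thesis
  proof (rule negligible_Icc_cover[OF N \<open>a < b\<close> \<open>\<delta> > 0\<close>])
    fix \<D> c d
    assume "countable \<D>" "N \<subseteq> \<Union>\<D>"
      and Icc: "\<And>K. K \<in> \<D> \<Longrightarrow> K = {c K..d K}" "\<And>K. K \<in> \<D> \<Longrightarrow> a \<le> c K \<and> c K < d K \<and> d K \<le> b"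
      and ordered: "\<And>K L. \<lbrakk>K \<in> \<D>; L \<in> \<D>; K \<noteq> L\<rbrakk> \<Longrightarrow> d K \<le> c L \<or> d L \<le> c K"
      and small: "\<And>\<F>. \<lbrakk>\<F> \<subseteq> \<D>; finite \<F>\<rbrakk> \<Longrightarrow> (\<Sum>K\<in>\<F>. d K - c K) < \<delta>"
    have image_lmeasurable: "f ` K \<in> lmeasurable" if "K \<in> \<D>" for K
    proof -
      have "{c K..d K} \<subseteq> {a..b}"
        using Icc(2)[OF that] by auto
      then have "continuous_on {c K..d K} f"
        using abs_continuous_on_imp_continuous_on[OF ac] continuous_on_subset by blast
      then show ?thesis
        using Icc(1)[OF that] by (metis compact_Icc compact_continuous_image lmeasurable_compact)
    qed
    have image_small: "(\<Sum>K\<in>\<F>. measure lebesgue (f ` K)) \<le> \<epsilon>" if \<F>: "\<F> \<subseteq> \<D>" "finite \<F>" for \<F>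
    proof -
      have "(\<Sum>K\<in>\<F>. measure lebesgue (f ` K)) = (\<Sum>K\<in>\<F>. measure lebesgue (f ` {c K..d K}))"
        using \<F>(1) Icc(1) by (intro sum.cong) auto
      also have "\<dots> \<le> \<epsilon>"
      proof (rule \<delta>[OF \<F>(2)])
        show "a \<le> c K \<and> c K \<le> d K \<and> d K \<le> b" if "K \<in> \<F>" for K
          using Icc(2) \<F>(1) that by fastforce
        show "d K \<le> c L \<or> d L \<le> c K" if "K \<in> \<F>" "L \<in> \<F>" "K \<noteq> L" for K L
          using ordered \<F>(1) that by blast
      qed (rule small[OF \<F>])
      finally show ?thesis .
    qed
    show thesis
      using \<open>countable \<D>\<close> \<open>N \<subseteq> \<Union>\<D>\<close> image_lmeasurable image_small by (rule that)
  qed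
qed

lemma abs_continuous_on_negligible_image:
  fixes f :: "real \<Rightarrow> real"
  assumes ac: "abs_continuous_on a b f" and N: "negligible N" "N \<subseteq> {a..b}"
  shows "negligible (f ` N)"
proof (cases "a < b")
  case False
  then have "N \<subseteq> {a}"
    using N(2) by auto
  then have "finite (f ` N)"
    using finite_subset by blast
  then show ?thesis
    by (rule negligible_finite)
next
  case True
  show ?thesis
    unfolding negligible_outer_le
  proof (intro allI impI)
    fix \<epsilon> :: real assume "\<epsilon> > 0"
    obtain \<D> where "countable \<D>" "N \<subseteq> \<Union>\<D>" and image_lmeasurable: "\<And>K. K \<in> \<D> \<Longrightarrow> f ` K \<in> lmeasurable"
      and image_small: "\<And>\<F>. \<lbrakk>\<F> \<subseteq> \<D>; finite \<F>\<rbrakk> \<Longrightarrow> (\<Sum>K\<in>\<F>. measure lebesgue (f ` K)) \<le> \<epsilon>"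
      by (rule abs_continuous_on_image_Icc_cover[OF ac N True \<open>\<epsilon> > 0\<close>]) (rule that; blast)
    have countable_images: "countable ((\<lambda>K. f ` K) ` \<D>)"
      using \<open>countable \<D>\<close> by blast
    have lmeasurable_images: "L \<in> lmeasurable" if "L \<in> (\<lambda>K. f ` K) ` \<D>" for L
      using image_lmeasurable that by blast
    have finite_bound: "measure lebesgue (\<Union>\<E>) \<le> \<epsilon>" if \<E>: "\<E> \<subseteq> (\<lambda>K. f ` K) ` \<D>" "finite \<E>" for \<E>
    proof -
      obtain \<F> where \<F>: "\<F> \<subseteq> \<D>" "finite \<F>" "\<E> = (\<lambda>K. f ` K) ` \<F>"
        using finite_subset_image[OF \<E>(2,1)] by blast
      have "measure lebesgue (\<Union>\<E>) \<le> (\<Sum>K\<in>\<F>. measure lebesgue (f ` K))"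
        unfolding \<F>(3) using \<F> image_lmeasurable by (intro measure_UNION_le) auto
      also have "\<dots> \<le> \<epsilon>"
        using \<F>(1,2) by (rule image_small)
      finally show ?thesis .
    qed
    note Union_bound = countable_images lmeasurable_images finite_bound
    have "\<Union>((\<lambda>K. f ` K) ` \<D>) \<in> lmeasurable"
      by (rule fmeasurable_Union_bound[OF Union_bound])
    moreover have "measure lebesgue (\<Union>((\<lambda>K. f ` K) ` \<D>)) \<le> \<epsilon>"
      by (rule measure_Union_bound[OF Union_bound])
    moreover have "f ` N \<subseteq> \<Union>((\<lambda>K. f ` K) ` \<D>)"
      using \<open>N \<subseteq> \<Union>\<D>\<close> by blast
    ultimately show "\<exists>T. f ` N \<subseteq> T \<and> T \<in> lmeasurable \<and> measure lebesgue T \<le> \<epsilon>"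
      by blast
  qed
qed

lemma abs_continuous_on_measure_image_le:
  fixes f f' g :: "real \<Rightarrow> real"
  assumes ac: "abs_continuous_on a b f"
    and f': "AE s in lebesgue. s \<in> {a..b} \<longrightarrow> (f has_real_derivative f' s) (at s within {a..b})"
    and g: "g integrable_on {a..b}" and f'_le: "\<And>s. s \<in> {a..b} \<Longrightarrow> \<bar>f' s\<bar> \<le> g s"
  shows "measure lebesgue (f ` {a..b}) \<le> integral {a..b} g"
proof -
  obtain N where N: "{s \<in> space lebesgue. \<not> (s \<in> {a..b} \<longrightarrow> (f has_real_derivative f' s) (at s within {a..b}))} \<subseteq> N"
    and "emeasure lebesgue N = 0" "N \<in> sets lebesgue"
    using f' by (rule AE_E)
  then have "negligible N"
    by (simp add: negligible_iff_null_sets null_sets_def)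
  define G where "G = {a..b} - N"
  have "G \<in> sets lebesgue"
    using \<open>N \<in> sets lebesgue\<close> by (auto simp: G_def)
  moreover have "(f has_real_derivative f' s) (at s within G)" if "s \<in> G" for s
    using N that by (auto simp: G_def intro: has_field_derivative_subset)
  moreover have "(g has_integral integral {a..b} g) G"
  proof -
    have "negligible {s \<in> {a..b} - G. g s \<noteq> 0}" "negligible {s \<in> G - {a..b}. g s \<noteq> 0}"
      using \<open>negligible N\<close> by (auto simp: G_def intro: negligible_subset)
    then show ?thesis
      using g has_integral_spike_set_eq by blast
  qed
  moreover have "\<bar>f' s\<bar> \<le> g s" if "s \<in> G" for s
    using f'_le that by (auto simp: G_def)
  ultimately have fG: "f ` G \<in> lmeasurable" "measure lebesgue (f ` G) \<le> integral {a..b} g"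
    using measure_differentiable_image_real_le[of G f f' g] by (auto simp: integral_unique)
  have "negligible (f ` (N \<inter> {a..b}))"
    using \<open>negligible N\<close> by (intro abs_continuous_on_negligible_image[OF ac]) (auto intro: negligible_subset)
  then have "measure lebesgue (f ` G \<union> f ` (N \<inter> {a..b})) = measure lebesgue (f ` G)"
    using fG by (simp add: measure_Un_null_set negligible_iff_null_sets fmeasurableD)
  moreover have "f ` {a..b} = f ` G \<union> f ` (N \<inter> {a..b})"
    by (auto simp: G_def)
  ultimately show ?thesis
    using fG by simp
qed

lemma abs_diff_le_measure_continuous_image:
  fixes f :: "real \<Rightarrow> real"
  assumes f: "continuous_on {a..b} f" and "s \<in> {a..b}" "t \<in> {a..b}"
  shows "\<bar>f t - f s\<bar> \<le> measure lebesgue (f ` {a..b})"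
proof -
  have "{min (f s) (f t)..max (f s) (f t)} \<subseteq> f ` {a..b}"
    using assms connected_continuous_image[OF f connected_Icc]
    by (intro connected_contains_Icc) (auto simp: min_def max_def)
  moreover have "f ` {a..b} \<in> lmeasurable"
    using compact_continuous_image[OF f compact_Icc] by (rule lmeasurable_compact)
  ultimately have "measure lebesgue {min (f s) (f t)..max (f s) (f t)} \<le> measure lebesgue (f ` {a..b})"
    by (intro measure_mono_fmeasurable) auto
  then show ?thesis
    by (simp add: min_def max_def split: if_splits)
qed

section \<open>Uniform bounds on \<open>U1\<close>\<close>

lemma U1E:
  assumes "f \<in> U1"
  obtains f' where "abs_continuous_on 0 1 f" "f 0 = 0"
    "AE s in lebesgue. s \<in> {0..1} \<longrightarrow> (f has_real_derivative f' s) (at s within {0..1})"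
    "(\<lambda>s. (f' s)\<^sup>2) integrable_on {0..1}" "integral {0..1} (\<lambda>s. (f' s)\<^sup>2) \<le> 1"
  using assms unfolding U1_def by blast

lemma U1_abs_le_1:
  assumes "f \<in> U1" "t \<in> {0..1}"
  shows "\<bar>f t\<bar> \<le> 1"
proof -
  obtain f' where ac: "abs_continuous_on 0 1 f" and "f 0 = 0"
    and f': "AE s in lebesgue. s \<in> {0..1} \<longrightarrow> (f has_real_derivative f' s) (at s within {0..1})"
    and sq: "(\<lambda>s. (f' s)\<^sup>2) integrable_on {0..1}" "integral {0..1} (\<lambda>s. (f' s)\<^sup>2) \<le> 1"
    using assms(1) by (rule U1E)
  define g where "g s = (1 + (f' s)\<^sup>2) / 2" for s
  have g: "(g has_integral (1 + integral {0..1} (\<lambda>s. (f' s)\<^sup>2)) / 2) {0..1}"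
    unfolding g_def using has_integral_const_real[of 1 0 1] integrable_integral[OF sq(1)]
    by (intro has_integral_divide has_integral_add) auto
  have "\<bar>f' s\<bar> \<le> g s" for s
    using sum_power2_ge_zero[of "\<bar>f' s\<bar> - 1" 0] by (simp add: g_def power2_eq_square algebra_simps)
  then have "measure lebesgue (f ` {0..1}) \<le> integral {0..1} g"
    using g by (intro abs_continuous_on_measure_image_le[OF ac f']) auto
  also have "\<dots> \<le> 1"
    using g sq(2) by (simp add: integral_unique)
  finally have "measure lebesgue (f ` {0..1}) \<le> 1" .
  moreover have "\<bar>f t - f 0\<bar> \<le> measure lebesgue (f ` {0..1})"
    using abs_continuous_on_imp_continuous_on[OF ac] assms(2)
    by (intro abs_diff_le_measure_continuous_image) auto
  ultimately show ?thesis
    using \<open>f 0 = 0\<close> by simp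
qed

lemma gmean_U1_abs_le_1:
  assumes f: "f \<in> U1" and t: "t \<in> {0..1}"
  shows "\<bar>gmean f t\<bar> \<le> 1"
proof (cases "t = 0")
  case False
  then have "t > 0"
    using t by auto
  have "abs_continuous_on 0 1 f"
    using f by (rule U1E)
  then have "continuous_on {0..t} f"
    using t by (elim abs_continuous_on_imp_continuous_on[THEN continuous_on_subset]) auto
  then have "norm (integral {0..t} f) \<le> 1 * (t - 0)"
    using t U1_abs_le_1[OF f] by (intro integral_bound) auto
  then show ?thesis
    using \<open>t > 0\<close> by (simp add: gmean_def abs_mult)
qed (simp add: gmean_def)

lemma Hull_lmeasurable_area_le:
  assumes "\<And>t. t \<in> {0..1} \<Longrightarrow> \<bar>g t\<bar> \<le> M"
  shows "Hull g \<in> lmeasurable" "area (Hull g) \<le> 2 * M"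
proof -
  have "(t, g t) \<in> cbox (0, -M) (1, M)" if "t \<in> {0..1}" for t
    using assms[OF that] that by (simp add: cbox_Pair_eq abs_le_iff)
  then have sub: "Hull g \<subseteq> cbox (0, -M) (1, M)"
    unfolding Hull_def by (intro hull_minimal convex_box) auto
  then show "Hull g \<in> lmeasurable"
    unfolding Hull_def by (intro measurable_convex convex_convex_hull bounded_subset[OF bounded_cbox])
  then have "area (Hull g) \<le> measure lebesgue (cbox (0::real, -M) (1::real, M))"
    unfolding area_def using sub by (intro measure_mono_fmeasurable) auto
  also have "\<dots> = 2 * M"
    using assms[of 0] by (simp add: content_Pair)
  finally show "area (Hull g) \<le> 2 * M" .
qed

lemma bdd_above_area_Hull_gmean_U1: "bdd_above {area (Hull (gmean f)) | f. f \<in> U1}"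
proof (rule bdd_aboveI)
  show "A \<le> 2" if "A \<in> {area (Hull (gmean f)) | f. f \<in> U1}" for A
    using that Hull_lmeasurable_area_le(2)[of "gmean _" 1] gmean_U1_abs_le_1 by fastforce
qed

section \<open>Regions between graphs\<close>

definition region_between :: "real \<Rightarrow> real \<Rightarrow> (real \<Rightarrow> real) \<Rightarrow> (real \<Rightarrow> real) \<Rightarrow> (real \<times> real) set" where
  "region_between a b l u = {p. a \<le> fst p \<and> fst p \<le> b \<and> l (fst p) \<le> snd p \<and> snd p \<le> u (fst p)}"

lemma region_between_cong:
  assumes "\<And>x. x \<in> {a..b} \<Longrightarrow> l x = l' x" "\<And>x. x \<in> {a..b} \<Longrightarrow> u x = u' x"
  shows "region_between a b l u = region_between a b l' u'"
  using assms by (auto simp: region_between_def)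

lemma measure_region_between:
  assumes [measurable]: "l \<in> borel_measurable borel" "u \<in> borel_measurable borel"
    and le: "\<And>x. x \<in> {a..b} \<Longrightarrow> l x \<le> u x"
    and I: "((\<lambda>x. u x - l x) has_integral I) {a..b}"
  shows "region_between a b l u \<in> sets lebesgue" "measure lebesgue (region_between a b l u) = I"
proof -
  let ?R = "region_between a b l u"
  have [measurable]: "l \<in> borel_measurable lborel" "u \<in> borel_measurable lborel"
    by simp_all
  have "?R = {p \<in> space (lborel \<Otimes>\<^sub>M lborel). a \<le> fst p \<and> fst p \<le> b \<and> l (fst p) \<le> snd p \<and> snd p \<le> u (fst p)}"
    by (auto simp: region_between_def space_pair_measure)
  also have "\<dots> \<in> sets (lborel \<Otimes>\<^sub>M lborel)"
    by measurable
  finally have R: "?R \<in> sets (lborel \<Otimes>\<^sub>M lborel)" .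
  have "Pair x -` ?R = (if x \<in> {a..b} then {l x..u x} else {})" for x
    by (auto simp: region_between_def)
  then have slice: "emeasure lborel (Pair x -` ?R) = ennreal (u x - l x) * indicator {a..b} x" for x
    using le[of x] by (auto simp: indicator_def)
  have "emeasure lborel ?R = emeasure (lborel \<Otimes>\<^sub>M lborel) ?R"
    by (simp add: lborel_prod)
  also have "\<dots> = (\<integral>\<^sup>+x. emeasure lborel (Pair x -` ?R) \<partial>lborel)"
    by (rule lborel.emeasure_pair_measure_alt[OF R])
  also have "\<dots> = ennreal I"
    unfolding slice using le by (intro nn_integral_has_integral_lebesgue'[OF _ I]) auto
  finally have "measure lborel ?R = I"
    using has_integral_nonneg[OF I] le by (simp add: measure_def)
  moreover have "?R \<in> sets borel"
    using R by (metis lborel_prod sets_lborel)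
  ultimately show "?R \<in> sets lebesgue" "measure lebesgue ?R = I"
    by simp_all
qed

lemma region_between_chord_subset_Hull:
  "region_between 0 1 (\<lambda>x. (1 - x) * g 0 + x * g 1) g \<subseteq> Hull g"
proof
  fix p assume "p \<in> region_between 0 1 (\<lambda>x. (1 - x) * g 0 + x * g 1) g"
  then obtain x y where p: "p = (x, y)" and x: "0 \<le> x" "x \<le> 1"
    and y: "(1 - x) * g 0 + x * g 1 \<le> y" "y \<le> g x"
    by (cases p) (auto simp: region_between_def)
  define c where "c = (1 - x) * g 0 + x * g 1"
  have convex: "convex (Hull g)"
    unfolding Hull_def by (rule convex_convex_hull)
  have graph: "(t, g t) \<in> Hull g" if "t \<in> {0..1}" for t
    unfolding Hull_def using that by (intro hull_inc) auto
  have "(1 - x) *\<^sub>R (0, g 0) + x *\<^sub>R (1, g 1) \<in> Hull g"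
    using x by (intro convexD[OF convex graph graph]) auto
  then have chord: "(x, c) \<in> Hull g"
    by (simp add: c_def)
  show "p \<in> Hull g"
  proof (cases "g x = c")
    case True
    then show ?thesis
      using y graph[of x] x by (simp add: p c_def)
  next
    case False
    define v where "v = (y - c) / (g x - c)"
    have v: "0 \<le> v" "v \<le> 1"
      using y False by (auto simp: v_def c_def divide_simps)
    have "(1 - v) *\<^sub>R (x, c) + v *\<^sub>R (x, g x) \<in> Hull g"
      using v x by (intro convexD[OF convex chord graph]) auto
    moreover have "c + v * (g x - c) = y"
      using False by (simp add: v_def)
    then have "(1 - v) *\<^sub>R (x, c) + v *\<^sub>R (x, g x) = p"
      by (simp add: p algebra_simps)
    ultimately show ?thesis
      by simp
  qed
qed

section \<open>The witness\<close>

lemma has_integral_real_antiderivative: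
  fixes F f :: "real \<Rightarrow> real"
  assumes "a \<le> b" "\<And>x. (F has_real_derivative f x) (at x)"
  shows "(f has_integral F b - F a) {a..b}"
  using assms
  by (intro fundamental_theorem_of_calculus)
     (auto simp: has_real_derivative_iff_has_vector_derivative[symmetric] intro: has_field_derivative_at_within)

definition f0 :: "real \<Rightarrow> real" where
  "f0 t = 11/4 * t - 231/40 * t^2 + 121/40 * t^3"

definition f0' :: "real \<Rightarrow> real" where
  "f0' t = 11/4 - 231/20 * t + 363/40 * t^2"

definition g0 :: "real \<Rightarrow> real" where
  "g0 t = 11/8 * t - 77/40 * t^2 + 121/160 * t^3"

lemma f0_has_real_derivative: "(f0 has_real_derivative f0' t) (at t within S)"
  unfolding f0_def f0'_def by (rule derivative_eq_intros refl | simp)+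

lemma abs_f0'_le:
  assumes "t \<in> {0..1}"
  shows "\<bar>f0' t\<bar> \<le> 11/4"
proof -
  have "f0' t = 363/40 * (t - 7/11)^2 - 37/40"
    by (simp add: f0'_def power2_eq_square algebra_simps)
  moreover have "\<bar>t - 7/11\<bar> \<le> 7/11"
    using assms by (intro abs_leI) auto
  then have "(t - 7/11)^2 \<le> 49/121"
    using power_mono[of "\<bar>t - 7/11\<bar>" "7/11" 2] by (simp add: power2_eq_square)
  ultimately show ?thesis
    using zero_le_power2[of "t - 7/11"] by (intro abs_leI) linarith+
qed

lemma f0_in_U1: "f0 \<in> U1"
proof -
  have "(11/4)-lipschitz_on {0..1} f0"
  proof (rule lipschitz_onI)
    show "dist (f0 x) (f0 y) \<le> 11/4 * dist x y" if "x \<in> {0..1}" "y \<in> {0..1}" for x y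
      using field_differentiable_bound[of "{0..1}" f0 f0' "11/4" x y] f0_has_real_derivative abs_f0'_le that
      by (simp add: dist_norm)
  qed simp
  moreover have "((\<lambda>s. (f0' s)\<^sup>2) has_integral 121/125) {0..1}"
  proof -
    define F where "F t = 121/16*t - 2541/80*t^2 + 12221/200*t^3 - 83853/1600*t^4 + 131769/8000*t^5"
      for t :: real
    have "(F has_real_derivative (f0' t)\<^sup>2) (at t)" for t
      unfolding F_def f0'_def
      by (rule derivative_eq_intros refl | simp)+ (simp add: eval_nat_numeral algebra_simps)
    from has_integral_real_antiderivative[of 0 1, OF _ this] show ?thesis
      by (simp add: F_def)
  qed
  ultimately show ?thesis
    unfolding U1_def
    by (intro CollectI conjI exI[of _ f0'] lipschitz_on_imp_abs_continuous_on)
       (auto simp: f0_def f0_has_real_derivative integral_unique)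
qed

lemma gmean_f0:
  assumes "0 \<le> t"
  shows "gmean f0 t = g0 t"
proof -
  define F where "F t = 11/8*t^2 - 77/40*t^3 + 121/160*t^4" for t :: real
  have "(F has_real_derivative f0 t) (at t)" for t
    unfolding F_def f0_def by (rule derivative_eq_intros refl | simp add: eval_nat_numeral algebra_simps)+
  from has_integral_real_antiderivative[OF assms this] have "integral {0..t} f0 = F t"
    by (simp add: F_def integral_unique)
  then show ?thesis
    by (simp add: gmean_def g0_def F_def field_simps eval_nat_numeral)
qed

lemma measure_region_under_g0:
  "region_between 0 1 (\<lambda>x. 33/160 * x) g0 \<in> sets lebesgue"
  "measure lebesgue (region_between 0 1 (\<lambda>x. 33/160 * x) g0) = 253/1920"
proof -
  define F where "F t = 187/320*t^2 - 77/120*t^3 + 121/640*t^4" for t :: real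
  have "(F has_real_derivative g0 x - 33/160 * x) (at x)" for x
    unfolding F_def g0_def by (rule derivative_eq_intros refl | simp add: eval_nat_numeral algebra_simps)+
  from has_integral_real_antiderivative[of 0 1, OF _ this]
  have integral: "((\<lambda>x. g0 x - 33/160 * x) has_integral 253/1920) {0..1}"
    by (simp add: F_def)
  have le: "33/160 * x \<le> g0 x" if "x \<in> {0..1}" for x
  proof -
    have "g0 x - 33/160 * x = 11/160 * x * (1 - x) * (17 - 11 * x)"
      by (simp add: g0_def power2_eq_square power3_eq_cube algebra_simps)
    moreover have "0 \<le> 11/160 * x * (1 - x) * (17 - 11 * x)"
      using that by (intro mult_nonneg_nonneg) auto
    ultimately show ?thesis
      by linarith
  qed
  have "(\<lambda>x::real. 33/160 * x) \<in> borel_measurable borel" "g0 \<in> borel_measurable borel"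
    unfolding g0_def by (intro borel_measurable_continuous_onI continuous_intros)+
  note region = measure_region_between[where l = "\<lambda>x. 33/160 * x" and u = g0, OF this le integral]
  show "region_between 0 1 (\<lambda>x. 33/160 * x) g0 \<in> sets lebesgue"
    by (rule region(1))
  show "measure lebesgue (region_between 0 1 (\<lambda>x. 33/160 * x) g0) = 253/1920"
    by (rule region(2))
qed

theorem propositionA1:
  shows "theta \<ge> 0.090435"
proof -
  let ?R = "region_between 0 1 (\<lambda>x. 33/160 * x) g0"
  have "?R = region_between 0 1 (\<lambda>x. (1 - x) * gmean f0 0 + x * gmean f0 1) (gmean f0)"
    by (intro region_between_cong) (simp_all add: gmean_f0 g0_def)
  then have "?R \<subseteq> Hull (gmean f0)"
    using region_between_chord_subset_Hull by simp
  then have "253/1920 \<le> area (Hull (gmean f0))"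
    unfolding area_def measure_region_under_g0(2)[symmetric]
    using measure_region_under_g0(1) Hull_lmeasurable_area_le(1)[OF gmean_U1_abs_le_1[OF f0_in_U1]]
    by (intro measure_mono_fmeasurable)
  also have "\<dots> \<le> Sup {area (Hull (gmean f)) | f. f \<in> U1}"
    using f0_in_U1 bdd_above_area_Hull_gmean_U1 by (intro cSup_upper) auto
  finally have "253/1920 / sqrt 2 \<le> Sup {area (Hull (gmean f)) | f. f \<in> U1} / sqrt 2"
    by (rule divide_right_mono) simp
  then have "253/1920 / sqrt 2 \<le> theta"
    by (simp add: theta_def)
  moreover have "sqrt 2 \<le> (1.4143::real)"
    by (rule real_le_lsqrt) (simp_all add: power2_eq_square)
  then have "0.090435 \<le> 253/1920 / sqrt (2::real)"
    by (simp add: field_simps)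
  ultimately show ?thesis
    by linarith
qed

end
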